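(* Let $X$ be a non-empty set, $(Y,\langle\cdot,\cdot\rangle)$ a real inner product space, and let $I:X\to\mathbb{R}$, $\Phi:X\to Y$ be such that (i) $\sup_X I<+\infty$; (ii) $\inf_{z\in\Phi(X)}\langle z,y\rangle=-\infty$ for all $y\in\Phi(X)\setminus\{0\}$. Then, for each $\mu>0$, at least one of the following assertions holds: (a) for each filtering cover $\mathcal{N}$ of $X$ there exists $A\in\mathcal{N}$ such that $$\sup_{\lambda\in Y}\inf_{x\in A}\big(I(x)+\mu(2\langle\Phi(x),\lambda\rangle-\|\lambda\|^2)\big)<\inf_{x\in A}\sup_{\lambda\in\Phi(A)}\big(I(x)+\mu(2\langle\Phi(x),\lambda\rangle-\|\lambda\|^2)\big);$$ (b) the set of all global minima in $X$ of the function $x\mapsto I(x)+\mu\|\Phi(x)\|^2$ is contained in $\Phi^{-1}(0)$.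
   Context: A family $\mathcal{N}$ of non-empty subsets of $X$ is a filtering cover of $X$ if $\bigcup_{A\in\mathcal{N}}A=X$ and for each $A_1,A_2\in\mathcal{N}$ there is $A_3\in\mathcal{N}$ with $A_1\cup A_2\subseteq A_3$. *)

theory Defs
  imports "HOL-Analysis.Analysis"
begin

definition filtering_cover :: "'a set \<Rightarrow> 'a set set \<Rightarrow> bool" where
  "filtering_cover X N \<longleftrightarrow>
     (\<forall>A\<in>N. A \<noteq> {} \<and> A \<subseteq> X) \<and> \<Union>N = X \<and>
     (\<forall>A1\<in>N. \<forall>A2\<in>N. \<exists>A3\<in>N. A1 \<union> A2 \<subseteq> A3)"

end

theory Submission
  imports Defs
begin

text \<open>Let \<open>x\<^sub>0\<close> minimise \<open>f = I + \<mu>\<parallel>\<Phi>\<parallel>\<^sup>2\<close> with \<open>a = \<Phi> x\<^sub>0 \<noteq> 0\<close>, and write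
  \<open>L(x,\<lambda>) = I x + \<mu>(2\<langle>\<Phi> x,\<lambda>\<rangle> - \<parallel>\<lambda>\<parallel>\<^sup>2) = f x - \<mu>\<parallel>\<lambda> - \<Phi> x\<parallel>\<^sup>2\<close>. Taking \<open>\<lambda> = \<Phi> x\<close> shows
  that the infimum over \<open>x \<in> A\<close> of the supremum over \<open>\<lambda> \<in> \<Phi>(A)\<close> of \<open>L\<close> is at least \<open>f x\<^sub>0\<close>
  for every \<open>A \<subseteq> X\<close>. Conversely, by (ii) there is \<open>x\<^sub>1\<close> with
  \<open>\<langle>\<Phi> x\<^sub>1, a\<rangle>\<close> so negative that \<open>L(x\<^sub>1,\<lambda>) \<le> sup I + 2\<mu>\<langle>\<Phi> x\<^sub>1,\<lambda>\<rangle>\<close> stays below \<open>f x\<^sub>0\<close> by a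
  fixed margin near \<open>\<lambda> = a\<close>, while far from \<open>a\<close> already \<open>L(x\<^sub>0,\<lambda>)\<close> does. Any member of the
  filtering cover containing both \<open>x\<^sub>0\<close> and \<open>x\<^sub>1\<close> therefore has a strict minimax gap.\<close>

definition lagrangian :: "('a \<Rightarrow> real) \<Rightarrow> ('a \<Rightarrow> 'b::real_inner) \<Rightarrow> real \<Rightarrow> 'a \<Rightarrow> 'b \<Rightarrow> real" where
  "lagrangian I \<Phi> \<mu> x l = I x + \<mu> * (2 * (\<Phi> x \<bullet> l) - (norm l)\<^sup>2)"

lemma lagrangian_complete_square:
  "lagrangian I \<Phi> \<mu> x l = I x + \<mu> * (norm (\<Phi> x))\<^sup>2 - \<mu> * (norm (l - \<Phi> x))\<^sup>2"
  unfolding lagrangian_def dot_norm_neg[of "\<Phi> x" l] norm_minus_commute[of "\<Phi> x"]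
  by (simp add: field_simps)

lemma lagrangian_le_linear:
  assumes "\<mu> \<ge> 0" "I x \<le> S"
  shows "lagrangian I \<Phi> \<mu> x l \<le> S + 2 * \<mu> * (\<Phi> x \<bullet> l)"
  using assms unfolding lagrangian_def by (simp add: algebra_simps add_increasing2)

lemma filtering_cover_obtains_pair:
  assumes "filtering_cover X N" "x \<in> X" "y \<in> X"
  obtains A where "A \<in> N" "x \<in> A" "y \<in> A" "A \<subseteq> X"
proof -
  obtain A0 A1 where "A0 \<in> N" "x \<in> A0" "A1 \<in> N" "y \<in> A1"
    using assms unfolding filtering_cover_def by blast
  with assms(1) obtain A where "A \<in> N" "A0 \<union> A1 \<subseteq> A" "A \<subseteq> X"
    unfolding filtering_cover_def by meson
  with \<open>x \<in> A0\<close> \<open>y \<in> A1\<close> show thesis using that by blast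
qed

lemma ereal_SUP_bounded:
  assumes "(SUP x\<in>X. ereal (f x)) < \<infinity>"
  obtains S where "\<And>x. x \<in> X \<Longrightarrow> f x \<le> S"
proof -
  obtain n :: nat where n: "(SUP x\<in>X. ereal (f x)) < ereal (real n)"
    using assms less_PInf_Ex_of_nat by auto
  have "f x \<le> real n" if "x \<in> X" for x
    using order.strict_trans1[OF SUP_upper[OF that] n] by simp
  then show thesis using that by blast
qed

lemma inner_le_near:
  fixes a b l :: "'b::real_inner"
  assumes "norm (l - a) \<le> \<delta>"
  shows "b \<bullet> l \<le> b \<bullet> a + norm b * \<delta>"
proof -
  have "b \<bullet> (l - a) \<le> norm b * norm (l - a)"
    by (meson abs_le_D1 norm_cauchy_schwarz Cauchy_Schwarz_ineq2)
  also have "\<dots> \<le> norm b * \<delta>"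
    using assms by (simp add: mult_left_mono)
  finally show ?thesis by (simp add: inner_diff_right)
qed

text \<open>Either \<open>\<lambda>\<close> is \<open>\<delta>\<close>-far from \<open>a\<close>, and the concave quadratic loses \<open>\<mu>\<delta>\<^sup>2\<close>, or it is \<open>\<delta>\<close>-close,
  and the linear function stays within \<open>2\<mu>\<parallel>b\<parallel>\<delta> \<le> g/2\<close> of its value at \<open>a\<close>.\<close>

lemma quadratic_linear_gap:
  fixes a b :: "'b::real_inner"
  assumes "\<mu> > 0" "t + 2 * \<mu> * (b \<bullet> a) < s"
  obtains c where "c > 0"
    "\<And>l. s - \<mu> * (norm (l - a))\<^sup>2 \<le> s - c \<or> t + 2 * \<mu> * (b \<bullet> l) \<le> s - c"
proof -
  define g where "g = s - t - 2 * \<mu> * (b \<bullet> a)"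
  define \<delta> where "\<delta> = g / (4 * \<mu> * (norm b + 1))"
  define c where "c = min (g / 2) (\<mu> * \<delta>\<^sup>2)"
  have g: "g > 0" using assms(2) by (simp add: g_def)
  have nb: "norm b + 1 > 0" using norm_ge_zero[of b] by linarith
  have \<delta>: "\<delta> > 0" using g assms(1) nb by (simp add: \<delta>_def)
  have shift: "2 * \<mu> * norm b * \<delta> \<le> g / 2"
  proof -
    have "4 * \<mu> * (norm b + 1) \<noteq> 0"
      using assms(1) nb by simp
    then have "2 * \<mu> * norm b * \<delta> = (norm b / (norm b + 1)) * (g / 2)"
      unfolding \<delta>_def by (simp add: divide_simps)
    also have "\<dots> \<le> g / 2"
      using g nb by (intro mult_left_le_one_le) (auto simp: divide_le_eq_1)
    finally show ?thesis .
  qed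
  have c_le: "c \<le> g / 2" "c \<le> \<mu> * \<delta>\<^sup>2" unfolding c_def by simp_all
  have "s - \<mu> * (norm (l - a))\<^sup>2 \<le> s - c \<or> t + 2 * \<mu> * (b \<bullet> l) \<le> s - c" for l
  proof (cases "norm (l - a) \<ge> \<delta>")
    case True
    then have "\<mu> * \<delta>\<^sup>2 \<le> \<mu> * (norm (l - a))\<^sup>2"
      using \<delta> assms(1) by (intro mult_left_mono power_mono) auto
    with c_le have "s - \<mu> * (norm (l - a))\<^sup>2 \<le> s - c" by linarith
    then show ?thesis ..
  next
    case False
    have "2 * \<mu> * (b \<bullet> l) \<le> 2 * \<mu> * (b \<bullet> a + norm b * \<delta>)"
      using inner_le_near[of l a \<delta> b] False assms(1) by (intro mult_left_mono) auto
    also have "\<dots> = 2 * \<mu> * (b \<bullet> a) + 2 * \<mu> * norm b * \<delta>"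
      by (simp add: algebra_simps)
    finally have "t + 2 * \<mu> * (b \<bullet> l) \<le> s - c" using shift c_le g_def by argo
    then show ?thesis ..
  qed
  moreover have "c > 0" using g \<delta> assms(1) unfolding c_def by simp
  ultimately show thesis using that by blast
qed

lemma INF_SUP_lagrangian_ge_min:
  assumes "A \<subseteq> X" "\<And>y. y \<in> X \<Longrightarrow> m \<le> I y + \<mu> * (norm (\<Phi> y))\<^sup>2"
  shows "ereal m \<le> (INF x\<in>A. SUP l\<in>\<Phi> ` A. ereal (lagrangian I \<Phi> \<mu> x l))"
proof (rule INF_greatest)
  fix x assume "x \<in> A"
  then have "m \<le> lagrangian I \<Phi> \<mu> x (\<Phi> x)"
    using assms by (auto simp: lagrangian_complete_square)
  also have "ereal (lagrangian I \<Phi> \<mu> x (\<Phi> x)) \<le> (SUP l\<in>\<Phi> ` A. ereal (lagrangian I \<Phi> \<mu> x l))"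
    using \<open>x \<in> A\<close> by (intro SUP_upper) auto
  finally show "ereal m \<le> \<dots>" by simp
qed

lemma SUP_INF_le_of_two_points:
  assumes "x0 \<in> A" "x1 \<in> A" "\<And>l. f x0 l \<le> r \<or> f x1 l \<le> r"
  shows "(SUP l\<in>L. INF x\<in>A. ereal (f x l)) \<le> ereal r"
proof (rule SUP_least)
  fix l
  from assms(3)[of l] obtain x where "x \<in> A" "f x l \<le> r"
    using assms(1,2) by blast
  then have "(INF x\<in>A. ereal (f x l)) \<le> ereal (f x l)" by (intro INF_lower)
  also have "\<dots> \<le> ereal r" using \<open>f x l \<le> r\<close> by simp
  finally show "(INF x\<in>A. ereal (f x l)) \<le> ereal r" .
qed

lemma minimax_gap_of_nonzero_minimiser:
  fixes \<Phi> :: "'a \<Rightarrow> 'b::real_inner"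
  assumes sup_finite: "(SUP x\<in>X. ereal (I x)) < \<infinity>"
    and unbounded: "\<forall>y\<in>\<Phi> ` X - {0}. (INF z\<in>\<Phi> ` X. ereal (z \<bullet> y)) = - \<infinity>"
    and "\<mu> > 0" and N: "filtering_cover X N"
    and x0: "x0 \<in> X" "\<Phi> x0 \<noteq> 0"
    and min: "\<And>y. y \<in> X \<Longrightarrow> I x0 + \<mu> * (norm (\<Phi> x0))\<^sup>2 \<le> I y + \<mu> * (norm (\<Phi> y))\<^sup>2"
  shows "\<exists>A\<in>N. (SUP l\<in>UNIV. INF x\<in>A. ereal (lagrangian I \<Phi> \<mu> x l))
                < (INF x\<in>A. SUP l\<in>\<Phi> ` A. ereal (lagrangian I \<Phi> \<mu> x l))"
proof -
  define m where "m = I x0 + \<mu> * (norm (\<Phi> x0))\<^sup>2"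
  obtain S where S: "\<And>x. x \<in> X \<Longrightarrow> I x \<le> S" using ereal_SUP_bounded[OF sup_finite] by blast
  have "(INF z\<in>\<Phi> ` X. ereal (z \<bullet> \<Phi> x0)) < ereal ((m - S) / (2 * \<mu>))"
    using unbounded x0 by auto
  then obtain x1 where x1: "x1 \<in> X" "S + 2 * \<mu> * (\<Phi> x1 \<bullet> \<Phi> x0) < m"
    using \<open>\<mu> > 0\<close> by (auto simp: INF_less_iff field_simps)
  then obtain c where "c > 0" and c:
    "\<And>l. m - \<mu> * (norm (l - \<Phi> x0))\<^sup>2 \<le> m - c \<or> S + 2 * \<mu> * (\<Phi> x1 \<bullet> l) \<le> m - c"
    using quadratic_linear_gap[OF \<open>\<mu> > 0\<close>] by blast
  have gap: "lagrangian I \<Phi> \<mu> x0 l \<le> m - c \<or> lagrangian I \<Phi> \<mu> x1 l \<le> m - c" for l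
    using c[of l] lagrangian_le_linear[of \<mu> I x1 S \<Phi> l] S[OF x1(1)] \<open>\<mu> > 0\<close>
    unfolding lagrangian_complete_square[of I \<Phi> \<mu> x0] m_def by linarith
  obtain A where A: "A \<in> N" "x0 \<in> A" "x1 \<in> A" "A \<subseteq> X"
    using filtering_cover_obtains_pair[OF N x0(1) x1(1)] by blast
  have "(SUP l\<in>UNIV. INF x\<in>A. ereal (lagrangian I \<Phi> \<mu> x l)) \<le> ereal (m - c)"
    using SUP_INF_le_of_two_points[OF A(2,3) gap] .
  also have "\<dots> < ereal m" using \<open>c > 0\<close> by simp
  also have "\<dots> \<le> (INF x\<in>A. SUP l\<in>\<Phi> ` A. ereal (lagrangian I \<Phi> \<mu> x l))"
    using INF_SUP_lagrangian_ge_min[OF A(4)] min unfolding m_def by blast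
  finally show ?thesis using A(1) by blast
qed

theorem theorem3p5:
  fixes X :: "'a set" and I :: "'a \<Rightarrow> real" and \<Phi> :: "'a \<Rightarrow> 'b::real_inner"
  assumes "X \<noteq> {}"
    and "(SUP x\<in>X. ereal (I x)) < \<infinity>"
    and "\<forall>y\<in>\<Phi> ` X - {0}. (INF z\<in>\<Phi> ` X. ereal (z \<bullet> y)) = - \<infinity>"
    and "\<mu> > (0::real)"
  shows "(\<forall>N. filtering_cover X N \<longrightarrow>
            (\<exists>A\<in>N. (SUP l\<in>(UNIV::'b set). INF x\<in>A. ereal (I x + \<mu> * (2 * (\<Phi> x \<bullet> l) - (norm l)\<^sup>2)))
                    < (INF x\<in>A. SUP l\<in>\<Phi> ` A. ereal (I x + \<mu> * (2 * (\<Phi> x \<bullet> l) - (norm l)\<^sup>2)))))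
         \<or> {x\<in>X. \<forall>y\<in>X. I x + \<mu> * (norm (\<Phi> x))\<^sup>2 \<le> I y + \<mu> * (norm (\<Phi> y))\<^sup>2} \<subseteq> {x\<in>X. \<Phi> x = 0}"
proof -
  have "\<exists>A\<in>N. (SUP l\<in>(UNIV::'b set). INF x\<in>A. ereal (I x + \<mu> * (2 * (\<Phi> x \<bullet> l) - (norm l)\<^sup>2)))
                < (INF x\<in>A. SUP l\<in>\<Phi> ` A. ereal (I x + \<mu> * (2 * (\<Phi> x \<bullet> l) - (norm l)\<^sup>2)))"
    if "filtering_cover X N" "x0 \<in> X" "\<Phi> x0 \<noteq> 0"
      "\<forall>y\<in>X. I x0 + \<mu> * (norm (\<Phi> x0))\<^sup>2 \<le> I y + \<mu> * (norm (\<Phi> y))\<^sup>2" for N x0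
    using minimax_gap_of_nonzero_minimiser[OF assms(2,3,4) that(1-3)] that(4)
    unfolding lagrangian_def by blast
  then show ?thesis by blast
qed

end
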